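(* Let $\lambda,\mu\in DP$ with $D_\mu\subseteq D_\lambda$, let $k>1$, and let $T$ be a tableau of shape $D_{\lambda/\mu}$ such that either $c(T)_k=c(T)_{k-1}=0$ or all of the following hold: (1) there is a box $(x,y)$ with $T(x,y)=k-1$ and $T(z,y)\ne k$ for all $z>x$; (2) if $T(x,y)=k$ then there is $z<x$ with $T(z,y)=k-1$; (3) if $T(x,y)=k'$ then $T(x-1,y-1)=(k-1)'$; (4) $T^{(k-1)}$ is fitting; (5) if $c(T)_k>0$ then $T^{(k)}$ is fitting. Then $T$ is $k$-amenable.
   Context: $DP$: partitions with distinct parts (including $\emptyset$). Shifted diagram $D_\lambda=\{(i,j):1\le i\le\ell(\lambda),\ i\le j\le i+\lambda_i-1\}$ (row $i$, column $j$); $D_{\lambda/\mu}=D_\lambda\setminus D_\mu$. Alphabet $\mathcal A=\{1'<1<2'<2<\cdots\}$, $|x|$ unmarked version of a letter. A tableau of shape $D$ is $T:D\to\mathcal A$, weakly increasing along rows and down columns, each unmarked $k$ at most once per column, each marked $k'$ at most once per row; $c(T)_i$ = number of entries $i$ or $i'$. Reading word $w=w_1\cdots w_n$: rows read left to right, from bottom row to top row. $m_i(0)=0$; for $1\le j\le n$, $m_i(j)$ = number of letters $i$ in $w_{n-j+1}\cdots w_n$; for $n<j\le2n$, $m_i(j)=m_i(n)+$ number of letters $i'$ in $w_1\cdots w_{j-n}$. $w$ is $k$-amenable if (a) for $0\le j\le n-1$, $m_k(j)=m_{k-1}(j)$ implies $w_{n-j}\notin\{k,k'\}$; (b) for $n\le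 j\le2n-1$, $m_k(j)=m_{k-1}(j)$ implies $w_{j-n+1}\notin\{k-1,k'\}$; (c) if $j$ is smallest with $w_j\in\{k',k\}$ then $w_j=k$; (d) if $j$ is smallest with $w_j\in\{(k-1)',k-1\}$ then $w_j=k-1$. $T$ is $k$-amenable if $w(T)$ is. $T^{(i)}=\{(x,y):|T(x,y)|=i\}$; its components are border strips; the last box of a border strip $B$ is the $(u,v)\in B$ with $(u+1,v),(u,v-1)\notin B$, and the last box of $T^{(i)}$ is that of its leftmost component; $T^{(i)}$ is fitting if its last box contains $i$. *)

theory Defs
  imports Main
begin

text \<open>A partition with distinct parts is a strictly decreasing list of positive naturals
  (the empty list is the empty partition). Part lambda_i is lam ! (i-1).\<close>
definition DP :: "nat list \<Rightarrow> bool" where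
  "DP lam \<longleftrightarrow> sorted_wrt (>) lam \<and> 0 \<notin> set lam"

definition shifted_diagram :: "nat list \<Rightarrow> (nat \<times> nat) set" where
  "shifted_diagram lam = {(i,j). 1 \<le> i \<and> i \<le> length lam \<and> i \<le> j \<and> j < i + lam ! (i - 1)}"

text \<open>A letter is a pair (i, marked): (i, True) is i', (i, False) is i, with i \<ge> 1.
  The order 1' < 1 < 2' < 2 < ... is given by the rank 2i-1 for i', 2i for i.\<close>
type_synonym letter = "nat \<times> bool"

definition lrank :: "letter \<Rightarrow> nat" where
  "lrank a = 2 * fst a - (if snd a then 1 else 0)"

definition is_tableau :: "(nat \<times> nat) set \<Rightarrow> (nat \<times> nat \<Rightarrow> letter) \<Rightarrow> bool" where
  "is_tableau D T \<longleftrightarrow>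
     (\<forall>p\<in>D. fst (T p) \<ge> 1) \<and>
     (\<forall>x y y'. (x,y) \<in> D \<and> (x,y') \<in> D \<and> y < y' \<longrightarrow> lrank (T (x,y)) \<le> lrank (T (x,y'))) \<and>
     (\<forall>x x' y. (x,y) \<in> D \<and> (x',y) \<in> D \<and> x < x' \<longrightarrow> lrank (T (x,y)) \<le> lrank (T (x',y))) \<and>
     (\<forall>x x' y. (x,y) \<in> D \<and> (x',y) \<in> D \<and> x < x' \<and> T (x,y) = T (x',y) \<longrightarrow> snd (T (x,y))) \<and>
     (\<forall>x y y'. (x,y) \<in> D \<and> (x,y') \<in> D \<and> y < y' \<and> T (x,y) = T (x,y') \<longrightarrow> \<not> snd (T (x,y)))"

definition content :: "(nat \<times> nat) set \<Rightarrow> (nat \<times> nat \<Rightarrow> letter) \<Rightarrow> nat \<Rightarrow> nat" where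
  "content D T i = card {p \<in> D. fst (T p) = i}"

definition coord_bound :: "(nat \<times> nat) set \<Rightarrow> nat" where
  "coord_bound D = Suc (Max (insert 0 (fst ` D \<union> snd ` D)))"

definition reading_word :: "(nat \<times> nat) set \<Rightarrow> (nat \<times> nat \<Rightarrow> letter) \<Rightarrow> letter list" where
  "reading_word D T =
     (let B = coord_bound D in
      concat (map (\<lambda>x. map (\<lambda>y. T (x,y)) (filter (\<lambda>y. (x,y) \<in> D) [0..<B])) (rev [0..<B])))"

text \<open>m_i(j) for the word w of length n, 0 \<le> j \<le> 2n (w_j is w ! (j-1)).\<close>
definition mcount :: "letter list \<Rightarrow> nat \<Rightarrow> nat \<Rightarrow> nat" where
  "mcount w i j =
     (if j \<le> length w then length (filter (\<lambda>a. a = (i, False)) (drop (length w - j) w))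
      else length (filter (\<lambda>a. a = (i, False)) w)
           + length (filter (\<lambda>a. a = (i, True)) (take (j - length w) w)))"

definition amenable_word :: "nat \<Rightarrow> letter list \<Rightarrow> bool" where
  "amenable_word k w \<longleftrightarrow>
     (let n = length w in
      (\<forall>j < n. mcount w k j = mcount w (k - 1) j \<longrightarrow> fst (w ! (n - j - 1)) \<noteq> k) \<and>
      (\<forall>j. n \<le> j \<and> j < 2 * n \<longrightarrow> mcount w k j = mcount w (k - 1) j \<longrightarrow>
            w ! (j - n) \<noteq> (k - 1, False) \<and> w ! (j - n) \<noteq> (k, True)) \<and>
      (\<forall>j < n. fst (w ! j) = k \<and> (\<forall>i < j. fst (w ! i) \<noteq> k) \<longrightarrow> w ! j = (k, False)) \<and>
      (\<forall>j < n. fst (w ! j) = k - 1 \<and> (\<forall>i < j. fst (w ! i) \<noteq> k - 1) \<longrightarrow> w ! j = (k - 1, False)))"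

definition amenable_tableau :: "nat \<Rightarrow> (nat \<times> nat) set \<Rightarrow> (nat \<times> nat \<Rightarrow> letter) \<Rightarrow> bool" where
  "amenable_tableau k D T \<longleftrightarrow> amenable_word k (reading_word D T)"

definition level_set :: "(nat \<times> nat) set \<Rightarrow> (nat \<times> nat \<Rightarrow> letter) \<Rightarrow> nat \<Rightarrow> (nat \<times> nat) set" where
  "level_set D T i = {p \<in> D. fst (T p) = i}"

definition box_adj :: "nat \<times> nat \<Rightarrow> nat \<times> nat \<Rightarrow> bool" where
  "box_adj p q \<longleftrightarrow> (fst p = fst q \<and> (snd q = Suc (snd p) \<or> snd p = Suc (snd q))) \<or>
                    (snd p = snd q \<and> (fst q = Suc (fst p) \<or> fst p = Suc (fst q)))"

definition component :: "(nat \<times> nat) set \<Rightarrow> nat \<times> nat \<Rightarrow> (nat \<times> nat) set" where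
  "component S p = {q \<in> S. (\<lambda>a b. a \<in> S \<and> b \<in> S \<and> box_adj a b)\<^sup>*\<^sup>* p q}"

definition leftmost_component :: "(nat \<times> nat) set \<Rightarrow> (nat \<times> nat) set" where
  "leftmost_component S = component S (SOME p. p \<in> S \<and> snd p = Min (snd ` S))"

definition last_box :: "(nat \<times> nat) set \<Rightarrow> nat \<times> nat" where
  "last_box B = (THE p. p \<in> B \<and> (Suc (fst p), snd p) \<notin> B \<and> (fst p, snd p - 1) \<notin> B)"

definition fitting :: "(nat \<times> nat) set \<Rightarrow> (nat \<times> nat \<Rightarrow> letter) \<Rightarrow> nat \<Rightarrow> bool" where
  "fitting D T i \<longleftrightarrow> T (last_box (leftmost_component (level_set D T i))) = (i, False)"

end

theory Submission
  imports Defs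
begin

text \<open>
  Condition (2) pairs every unmarked \<open>k\<close> with an unmarked \<open>k-1\<close> higher up in its
  column, injectively because an unmarked letter occurs at most once per column; the partner
  lies in an earlier row and is therefore read later. A box containing \<open>k\<close> or \<open>k'\<close> has
  an unmarked \<open>k-1\<close> above it that is read later but is not the partner of any letter read
  after the box: its own partner, or for \<open>k'\<close> the unmarked \<open>k-1\<close> produced by condition (3).
  Hence after any letter \<open>k\<close> or \<open>k'\<close> fewer letters \<open>k\<close> than \<open>k-1\<close> are read, which
  is (a). For (b), condition (1) makes the total number of unmarked \<open>k\<close> smaller than that of
  unmarked \<open>k-1\<close>, and condition (3) moves every \<open>k'\<close> read before a letter \<open>k-1\<close> or
  \<open>k'\<close> to a \<open>(k-1)'\<close> diagonally above it that is still read before that letter.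

  For (c) and (d): \<open>T^(i)\<close> is an order-convex set of boxes containing no hook
  \<open>(a,b-1), (a,b), (a+1,b)\<close>. Walking down when possible and left otherwise is therefore
  a deterministic walk along the border strips which, started in the leftmost column, ends at
  the box in the lowest row and leftmost column. That box is the last box of the leftmost
  component and the first box of \<open>T^(i)\<close> in the reading word, so fitting means that the
  first letter \<open>i\<close> or \<open>i'\<close> read is unmarked.
\<close>

lemma fst_eq_if_lrank_between:
  assumes "fst a \<ge> 1" "fst b = fst c" "lrank b \<le> lrank a" "lrank a \<le> lrank c"
  shows "fst a = fst c"
  using assms by (cases a, cases b, cases c) (auto simp: lrank_def split: if_splits)

lemma letter_between_marked:
  assumes "fst a \<ge> 1" "k > 1" "lrank (k - 1, True) \<le> lrank a" "lrank a \<le> lrank (k, True)"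
  shows "a = (k - 1, True) \<or> a = (k - 1, False) \<or> a = (k, True)"
  using assms by (cases a) (auto simp: lrank_def split: if_splits)

lemma sorted_wrt_greater_nth_gap:
  assumes "sorted_wrt (>) xs" "j < length xs" "i \<le> j"
  shows "xs ! j + (j - i) \<le> (xs ! i :: nat)"
  using assms
proof (induction j)
  case 0
  then show ?case by simp
next
  case (Suc j)
  show ?case
  proof (cases "i = Suc j")
    case False
    then have "xs ! j + (j - i) \<le> xs ! i" using Suc by simp
    moreover have "xs ! Suc j < xs ! j"
      using Suc.prems sorted_wrt_nth_less[of "(>)" xs j "Suc j"] by simp
    ultimately show ?thesis using False Suc.prems(3) by simp
  qed simp
qed

lemma mem_shifted_diagram:
  "(i, j) \<in> shifted_diagram lam \<longleftrightarrow> 1 \<le> i \<and> i \<le> length lam \<and> i \<le> j \<and> j < i + lam ! (i - 1)"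
  unfolding shifted_diagram_def by simp

lemma DP_row_end_antimono:
  assumes "DP lam" "1 \<le> a" "a \<le> a'" "a' \<le> length lam"
  shows "a' + lam ! (a' - 1) \<le> a + lam ! (a - 1)"
proof -
  have "lam ! (a' - 1) + ((a' - 1) - (a - 1)) \<le> lam ! (a - 1)"
    using sorted_wrt_greater_nth_gap[of lam "a' - 1" "a - 1"] assms unfolding DP_def by simp
  then show ?thesis using assms by simp
qed

lemma shifted_diagram_up_closed:
  assumes "DP mu" "(a', b) \<in> shifted_diagram mu" "1 \<le> a" "a \<le> a'" "a \<le> b"
  shows "(a, b) \<in> shifted_diagram mu"
  using assms DP_row_end_antimono[of mu a a'] unfolding mem_shifted_diagram by fastforce

lemma skew_shifted_diagram_interval:
  assumes "DP lam" "DP mu"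
    and "(a, b) \<in> shifted_diagram lam - shifted_diagram mu"
    and "(a', b') \<in> shifted_diagram lam - shifted_diagram mu"
    and "a \<le> x" "x \<le> a'" "b \<le> y" "y \<le> b'" "x \<le> y"
  shows "(x, y) \<in> shifted_diagram lam - shifted_diagram mu"
proof -
  have ab: "1 \<le> a" "a \<le> b" "a' \<le> length lam" "b' < a' + lam ! (a' - 1)"
    using assms(3,4) by (auto simp: mem_shifted_diagram)
  then have "(x, y) \<in> shifted_diagram lam"
    using DP_row_end_antimono[OF assms(1), of x a'] assms(5-9) by (auto simp: mem_shifted_diagram)
  moreover have "(x, y) \<notin> shifted_diagram mu"
  proof
    assume "(x, y) \<in> shifted_diagram mu"
    then have "(a, y) \<in> shifted_diagram mu"
      using shifted_diagram_up_closed[OF assms(2)] ab assms(5-9) by simp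
    then have "(a, b) \<in> shifted_diagram mu"
      using ab assms(7) by (auto simp: mem_shifted_diagram)
    then show False using assms(3) by simp
  qed
  ultimately show ?thesis by simp
qed

lemma mem_level_set: "p \<in> level_set D T i \<longleftrightarrow> p \<in> D \<and> fst (T p) = i"
  by (simp add: level_set_def)

lemma content_eq_card_level_set: "content D T i = card (level_set D T i)"
  by (simp add: content_def level_set_def)

section \<open>Last boxes of sets without hooks\<close>

text \<open>Walk down when possible and left otherwise. On a set without hooks every box of a
  component walks to the same sink, which is then the unique last box of the component.\<close>
definition strip_step :: "(nat \<times> nat) set \<Rightarrow> nat \<times> nat \<Rightarrow> nat \<times> nat \<Rightarrow> bool" where
  "strip_step S u v \<longleftrightarrow> u \<in> S \<and> v \<in> S \<and>
     (v = (Suc (fst u), snd u) \<or> (v = (fst u, snd u - 1) \<and> (Suc (fst u), snd u) \<notin> S))"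

lemma strip_step_deterministic: "strip_step S u v \<Longrightarrow> strip_step S u w \<Longrightarrow> v = w"
  by (auto simp: strip_step_def)

lemma strip_step_box_adj: "strip_step S u v \<Longrightarrow> snd u \<ge> 1 \<Longrightarrow> box_adj u v"
  by (auto simp: strip_step_def box_adj_def)

lemma box_adj_strip_step:
  assumes no_hook: "\<And>a b. (a, b) \<in> S \<Longrightarrow> (Suc a, b) \<in> S \<Longrightarrow> (a, b - 1) \<in> S \<Longrightarrow> False"
    and "u \<in> S" "v \<in> S" "box_adj u v"
  shows "strip_step S u v \<or> strip_step S v u"
proof -
  obtain a b c d where uv: "u = (a, b)" "v = (c, d)" by (cases u, cases v)
  consider "a = c" "d = Suc b" | "a = c" "b = Suc d" | "b = d" "c = Suc a" | "b = d" "a = Suc c"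
    using assms(4) uv unfolding box_adj_def by auto
  then show ?thesis
  proof cases
    case 1
    then show ?thesis using assms(2,3) no_hook[of c d] uv by (auto simp: strip_step_def)
  next
    case 2
    then show ?thesis using assms(2,3) no_hook[of a b] uv by (auto simp: strip_step_def)
  qed (use assms(2,3) uv in \<open>simp_all add: strip_step_def\<close>)
qed

lemma strip_steps_box_adj:
  assumes "\<And>u. u \<in> S \<Longrightarrow> snd u \<ge> 1" and "(strip_step S)\<^sup>*\<^sup>* u v"
  shows "(\<lambda>a b. a \<in> S \<and> b \<in> S \<and> box_adj a b)\<^sup>*\<^sup>* u v"
  using assms(2)
proof induction
  case (step v w)
  then have "v \<in> S \<and> w \<in> S \<and> box_adj v w"
    using strip_step_box_adj assms(1) by (auto simp: strip_step_def)
  then show ?case using step.IH by (simp add: rtranclp.rtrancl_into_rtrancl)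
qed simp

lemma strip_steps_to_sink:
  assumes no_hook: "\<And>a b. (a, b) \<in> S \<Longrightarrow> (Suc a, b) \<in> S \<Longrightarrow> (a, b - 1) \<in> S \<Longrightarrow> False"
    and sink: "\<And>v. \<not> strip_step S q v"
    and walk: "(strip_step S)\<^sup>*\<^sup>* p0 q"
    and "(\<lambda>a b. a \<in> S \<and> b \<in> S \<and> box_adj a b)\<^sup>*\<^sup>* p0 p"
  shows "(strip_step S)\<^sup>*\<^sup>* p q"
  using assms(4)
proof induction
  case (step u v)
  have "strip_step S u v \<or> strip_step S v u"
    using box_adj_strip_step[of S u v, OF no_hook] step.hyps(2) by simp
  then consider "strip_step S u v" | "strip_step S v u" by blast
  then show ?case
  proof cases
    case 1
    from step.IH show ?thesis
    proof (cases rule: converse_rtranclpE)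
      case base
      then show ?thesis using 1 sink[of v] by simp
    next
      case (step w)
      then have "w = v" using strip_step_deterministic[OF _ 1] by blast
      then show ?thesis using step by simp
    qed
  next
    case 2
    then show ?thesis using step.IH by (rule converse_rtranclp_into_rtranclp)
  qed
qed (rule walk)

lemma last_box_component:
  assumes no_hook: "\<And>a b. (a, b) \<in> S \<Longrightarrow> (Suc a, b) \<in> S \<Longrightarrow> (a, b - 1) \<in> S \<Longrightarrow> False"
    and columns_pos: "\<And>u. u \<in> S \<Longrightarrow> snd u \<ge> 1"
    and sink: "q \<in> S" "(Suc (fst q), snd q) \<notin> S" "(fst q, snd q - 1) \<notin> S"
    and walk: "(strip_step S)\<^sup>*\<^sup>* p0 q"
  shows "last_box (component S p0) = q"
  unfolding last_box_def
proof (rule the_equality)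
  show "q \<in> component S p0 \<and> (Suc (fst q), snd q) \<notin> component S p0 \<and>
      (fst q, snd q - 1) \<notin> component S p0"
    using strip_steps_box_adj[OF columns_pos walk] sink by (auto simp: component_def)
next
  fix p assume p: "p \<in> component S p0 \<and> (Suc (fst p), snd p) \<notin> component S p0 \<and>
      (fst p, snd p - 1) \<notin> component S p0"
  then have p0p: "(\<lambda>a b. a \<in> S \<and> b \<in> S \<and> box_adj a b)\<^sup>*\<^sup>* p0 p"
    by (simp add: component_def)
  have "\<not> strip_step S q v" for v
    using sink by (auto simp: strip_step_def)
  from strip_steps_to_sink[OF no_hook this walk p0p] show "p = q"
  proof (rule converse_rtranclpE)
    fix v assume step: "strip_step S p v"
    then have "v \<in> component S p0"
      using rtranclp.rtrancl_into_rtrancl[OF p0p] strip_step_box_adj columns_pos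
      by (auto simp: component_def strip_step_def)
    then show ?thesis using p step unfolding strip_step_def by auto
  qed
qed

section \<open>Reading order\<close>

definition read_before :: "nat \<times> nat \<Rightarrow> nat \<times> nat \<Rightarrow> bool" where
  "read_before p q \<longleftrightarrow> fst q < fst p \<or> (fst p = fst q \<and> snd p < snd q)"

lemma asymp_read_before: "asymp read_before"
  by (rule asympI) (auto simp: read_before_def)

lemma set_drop_Suc_sorted_wrt:
  assumes "sorted_wrt R xs" "asymp R" "i < length xs"
  shows "set (drop (Suc i) xs) = {y \<in> set xs. R (xs ! i) y}"
proof (intro set_eqI iffI)
  fix y assume "y \<in> set (drop (Suc i) xs)"
  then obtain m where "m < length (drop (Suc i) xs)" "drop (Suc i) xs ! m = y"
    by (metis in_set_conv_nth)
  then have m: "Suc i + m < length xs" "y = xs ! (Suc i + m)"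
    by auto
  then have "R (xs ! i) y"
    using sorted_wrt_nth_less[OF assms(1), of i "Suc i + m"] by simp
  then show "y \<in> {y \<in> set xs. R (xs ! i) y}"
    using m by simp
next
  fix y assume y: "y \<in> {y \<in> set xs. R (xs ! i) y}"
  then obtain j where j: "j < length xs" "y = xs ! j" by (auto simp: in_set_conv_nth)
  have "i < j"
    using y j sorted_wrt_nth_less[OF assms(1), of j i] assms(2,3)
    by (metis asympD linorder_neqE_nat mem_Collect_eq)
  then have "drop (Suc i) xs ! (j - Suc i) = y" "j - Suc i < length (drop (Suc i) xs)"
    using j by auto
  then show "y \<in> set (drop (Suc i) xs)"
    by (metis nth_mem)
qed

lemma set_take_sorted_wrt:
  assumes "sorted_wrt R xs" "asymp R" "i < length xs"
  shows "set (take i xs) = {y \<in> set xs. R y (xs ! i)}"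
proof (intro set_eqI iffI)
  fix y assume "y \<in> set (take i xs)"
  then obtain j where j: "j < i" "y = xs ! j"
    by (auto simp: in_set_conv_nth)
  then have "R y (xs ! i)"
    using sorted_wrt_nth_less[OF assms(1), of j i] assms(3) by simp
  then show "y \<in> {y \<in> set xs. R y (xs ! i)}"
    using j assms(3) by simp
next
  fix y assume y: "y \<in> {y \<in> set xs. R y (xs ! i)}"
  then obtain j where j: "j < length xs" "y = xs ! j" by (auto simp: in_set_conv_nth)
  have "j < i"
    using y j sorted_wrt_nth_less[OF assms(1), of i j] assms(2,3)
    by (metis asympD linorder_neqE_nat mem_Collect_eq)
  then show "y \<in> set (take i xs)"
    using j by (auto simp: in_set_conv_nth)
qed

definition reading_boxes :: "(nat \<times> nat) set \<Rightarrow> (nat \<times> nat) list" where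
  "reading_boxes D =
     (let B = coord_bound D in
      concat (map (\<lambda>x. map (\<lambda>y. (x, y)) (filter (\<lambda>y. (x, y) \<in> D) [0..<B])) (rev [0..<B])))"

lemma reading_word_eq_map: "reading_word D T = map T (reading_boxes D)"
  by (simp add: reading_word_def reading_boxes_def Let_def map_concat comp_def)

lemma sorted_wrt_read_before_rows:
  assumes "sorted_wrt (<) ys"
  shows "sorted_wrt read_before
    (concat (map (\<lambda>x. map (\<lambda>y. (x, y)) (filter (P x) ys)) (rev [0..<n])))"
proof (induction n)
  case (Suc n)
  have "sorted_wrt read_before (map (\<lambda>y. (n, y)) (filter (P n) ys))"
    using assms by (simp add: sorted_wrt_map sorted_wrt_filter read_before_def)
  moreover have "\<forall>a \<in> set (map (\<lambda>y. (n, y)) (filter (P n) ys)).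
      \<forall>b \<in> set (concat (map (\<lambda>x. map (\<lambda>y. (x, y)) (filter (P x) ys)) (rev [0..<n]))).
        read_before a b"
    by (auto simp: read_before_def)
  ultimately show ?case
    using Suc.IH by (simp add: sorted_wrt_append)
qed simp

lemma sorted_wrt_reading_boxes: "sorted_wrt read_before (reading_boxes D)"
  unfolding reading_boxes_def Let_def by (rule sorted_wrt_read_before_rows) simp

lemma distinct_reading_boxes: "distinct (reading_boxes D)"
proof -
  have "sorted_wrt read_before xs \<Longrightarrow> distinct xs" for xs
    by (induction xs) (auto simp: read_before_def)
  then show ?thesis using sorted_wrt_reading_boxes by blast
qed

lemma set_reading_boxes:
  assumes "finite D"
  shows "set (reading_boxes D) = D"
proof -
  have "fst p < coord_bound D \<and> snd p < coord_bound D" if "p \<in> D" for p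
    using that assms unfolding coord_bound_def by (auto simp: less_Suc_eq_le intro!: Max_ge)
  then show ?thesis unfolding reading_boxes_def Let_def by (auto simp: image_iff)
qed

locale skew_shifted_tableau =
  fixes lam mu :: "nat list" and T :: "nat \<times> nat \<Rightarrow> letter"
  assumes DP_lam: "DP lam" and DP_mu: "DP mu"
    and tableau: "is_tableau (shifted_diagram lam - shifted_diagram mu) T"
begin

abbreviation D :: "(nat \<times> nat) set" where
  "D \<equiv> shifted_diagram lam - shifted_diagram mu"

lemma entry_ge_1: "p \<in> D \<Longrightarrow> fst (T p) \<ge> 1"
  using tableau unfolding is_tableau_def by blast

lemma row_mono: "(x, y) \<in> D \<Longrightarrow> (x, y') \<in> D \<Longrightarrow> y \<le> y' \<Longrightarrow> lrank (T (x, y)) \<le> lrank (T (x, y'))"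
  using tableau unfolding is_tableau_def by (cases "y = y'") auto

lemma column_mono: "(x, y) \<in> D \<Longrightarrow> (x', y) \<in> D \<Longrightarrow> x \<le> x' \<Longrightarrow> lrank (T (x, y)) \<le> lrank (T (x', y))"
  using tableau unfolding is_tableau_def by (cases "x = x'") auto

lemma row_repeat_unmarked:
  "(x, y) \<in> D \<Longrightarrow> (x, y') \<in> D \<Longrightarrow> y < y' \<Longrightarrow> T (x, y) = T (x, y') \<Longrightarrow> \<not> snd (T (x, y))"
  using tableau unfolding is_tableau_def by blast

lemma column_repeat_marked:
  "(x, y) \<in> D \<Longrightarrow> (x', y) \<in> D \<Longrightarrow> x < x' \<Longrightarrow> T (x, y) = T (x', y) \<Longrightarrow> snd (T (x, y))"
  using tableau unfolding is_tableau_def by blast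

lemma unmarked_column_unique:
  assumes "q \<in> D" "q' \<in> D" "T q = (i, False)" "T q' = (i, False)" "snd q = snd q'"
  shows "q = q'"
proof -
  obtain x x' y where q: "q = (x, y)" "q' = (x', y)"
    using assms(5) by (cases q, cases q') auto
  show ?thesis
    using assms column_repeat_marked[of x y x'] column_repeat_marked[of x' y x] q
    by (cases x x' rule: linorder_cases) auto
qed

lemma mem_D_coords: "(x, y) \<in> D \<Longrightarrow> 1 \<le> x \<and> x \<le> y"
  by (auto simp: mem_shifted_diagram)

lemma finite_D: "finite D"
proof (rule finite_subset)
  show "D \<subseteq> {0..length lam} \<times> {0..length lam + lam ! 0}"
  proof
    fix p assume "p \<in> D"
    then obtain i j where p: "p = (i, j)" "1 \<le> i" "i \<le> length lam" "j < i + lam ! (i - 1)"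
      by (cases p) (auto simp: mem_shifted_diagram)
    moreover have "i + lam ! (i - 1) \<le> 1 + lam ! 0"
      using DP_row_end_antimono[OF DP_lam, of 1 i] p by simp
    ultimately show "p \<in> {0..length lam} \<times> {0..length lam + lam ! 0}" by simp
  qed
qed simp

lemma lrank_mono:
  assumes "(a, b) \<in> D" "(a', b') \<in> D" "a \<le> a'" "b \<le> b'"
  shows "lrank (T (a, b)) \<le> lrank (T (a', b'))"
proof -
  have "(a, b') \<in> D"
    using skew_shifted_diagram_interval[OF DP_lam DP_mu assms(1,2)] assms mem_D_coords[OF assms(1)]
    by simp
  then show ?thesis using row_mono[OF assms(1) _ assms(4)] column_mono[OF _ assms(2,3)] by fastforce
qed

lemma finite_level_set: "finite (level_set D T i)"
  by (rule finite_subset[OF _ finite_D]) (auto simp: mem_level_set)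

lemma content_pos: "q \<in> D \<Longrightarrow> fst (T q) = i \<Longrightarrow> content D T i > 0"
  using finite_level_set by (auto simp: content_eq_card_level_set card_gt_0_iff mem_level_set)

lemma level_set_convex:
  assumes "(a, b) \<in> level_set D T i" "(a', b') \<in> level_set D T i" "(x, y) \<in> D"
    and "a \<le> x" "x \<le> a'" "b \<le> y" "y \<le> b'"
  shows "(x, y) \<in> level_set D T i"
  using assms lrank_mono[of a b x y] lrank_mono[of x y a' b'] entry_ge_1[of "(x, y)"]
    fst_eq_if_lrank_between[of "T (x, y)" "T (a, b)" "T (a', b')"]
  by (auto simp: mem_level_set)

lemma level_set_column_interval:
  assumes "(a, y) \<in> level_set D T i" "(a', y) \<in> level_set D T i" "a \<le> x" "x \<le> a'"
  shows "(x, y) \<in> level_set D T i"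
proof -
  have "(x, y) \<in> D"
    using assms skew_shifted_diagram_interval[OF DP_lam DP_mu, of a y a' y x y]
      mem_D_coords[of a' y]
    by (auto simp: mem_level_set)
  then show ?thesis using level_set_convex[OF assms(1,2)] assms(3,4) by simp
qed

lemma level_set_no_hook:
  assumes "(a, b) \<in> level_set D T i" "(Suc a, b) \<in> level_set D T i" "(a, b - 1) \<in> level_set D T i"
  shows False
proof -
  have D: "(a, b) \<in> D" "(Suc a, b) \<in> D" "(a, b - 1) \<in> D"
    and same: "fst (T (Suc a, b)) = fst (T (a, b))" "fst (T (a, b - 1)) = fst (T (a, b))"
    using assms by (auto simp: mem_level_set)
  have "b \<ge> 1" using mem_D_coords[OF D(1)] by simp
  show False
  proof (cases "snd (T (a, b))")
    case False
    have "lrank (T (a, b)) \<le> lrank (T (Suc a, b))" using column_mono D by simp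
    then have "T (Suc a, b) = T (a, b)" using False same entry_ge_1[OF D(1)]
      by (cases "T (a, b)", cases "T (Suc a, b)") (auto simp: lrank_def split: if_splits)
    then show False using column_repeat_marked[OF D(1,2)] False by simp
  next
    case True
    have "lrank (T (a, b - 1)) \<le> lrank (T (a, b))" using row_mono D by simp
    then have "T (a, b - 1) = T (a, b)" using True same entry_ge_1[OF D(1)]
      by (cases "T (a, b)", cases "T (a, b - 1)") (auto simp: lrank_def split: if_splits)
    then show False using row_repeat_unmarked[OF D(3,1)] True \<open>b \<ge> 1\<close> by simp
  qed
qed

lemma level_set_step_down:
  assumes "(x, y) \<in> level_set D T i" "(r, b) \<in> level_set D T i" "x < r" "y < b"
  shows "(Suc x, y) \<in> level_set D T i"
proof -
  have xy_D: "(x, y) \<in> D" "(r, b) \<in> D" using assms(1,2) by (auto simp: mem_level_set)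
  have inside: "(x', y') \<in> level_set D T i"
    if "x \<le> x'" "x' \<le> r" "y \<le> y'" "y' \<le> b" "x' \<le> y'" for x' y'
    using level_set_convex[OF assms(1,2) skew_shifted_diagram_interval[OF DP_lam DP_mu xy_D]] that
    by simp
  show ?thesis
  proof (cases "Suc x \<le> y")
    case True
    then show ?thesis using inside assms(3,4) by simp
  next
    case False
    \<comment> \<open>\<open>(x, y)\<close> is a diagonal box, and \<open>T^(i)\<close> would contain a hook at \<open>(x, y + 1)\<close>\<close>
    then have "y = x" using mem_D_coords[OF xy_D(1)] by simp
    then have "(x, Suc x) \<in> level_set D T i" "(Suc x, Suc x) \<in> level_set D T i"
      using inside[of x "Suc x"] inside[of "Suc x" "Suc x"] assms(3,4) by auto
    then show ?thesis using level_set_no_hook assms(1) \<open>y = x\<close> by fastforce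
  qed
qed

lemma level_set_corner_mem:
  assumes "level_set D T i \<noteq> {}"
  shows "(Max (fst ` level_set D T i), Min (snd ` level_set D T i)) \<in> level_set D T i"
proof -
  let ?S = "level_set D T i"
  define r where "r = Max (fst ` ?S)"
  define m where "m = Min (snd ` ?S)"
  have r_max: "fst p \<le> r" and m_min: "m \<le> snd p" if "p \<in> ?S" for p
    using that finite_level_set by (auto simp: r_def m_def)
  have "m \<in> snd ` ?S" using finite_level_set assms by (simp add: m_def)
  then obtain x0 where x0: "(x0, m) \<in> ?S" by force
  define x1 where "x1 = Max {x. (x, m) \<in> ?S}"
  have fin_column: "finite {x. (x, m) \<in> ?S}"
    by (rule finite_subset[OF _ finite_imageI[OF finite_level_set, of fst]]) force
  have x1: "(x1, m) \<in> ?S"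
    using Max_in[OF fin_column] x0 unfolding x1_def by auto
  have x1_max: "x \<le> x1" if "(x, m) \<in> ?S" for x
    using Max_ge[OF fin_column] that unfolding x1_def by simp
  have "x1 = r"
  proof (rule ccontr)
    assume "x1 \<noteq> r"
    then have "x1 < r" using r_max[OF x1] by simp
    have "r \<in> fst ` ?S" using finite_level_set assms by (simp add: r_def)
    then obtain b where rb: "(r, b) \<in> ?S" by force
    have "b \<noteq> m" using x1_max[of r] rb \<open>x1 < r\<close> by auto
    then have "m < b" using m_min[OF rb] by simp
    then show False using level_set_step_down[OF x1 rb \<open>x1 < r\<close>] x1_max[of "Suc x1"] by simp
  qed
  then show ?thesis using x1 by (simp add: r_def m_def)
qed

lemma last_box_level_set:
  assumes "level_set D T i \<noteq> {}"
  shows "last_box (leftmost_component (level_set D T i)) =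
    (Max (fst ` level_set D T i), Min (snd ` level_set D T i))"
proof -
  let ?S = "level_set D T i"
  define r where "r = Max (fst ` ?S)"
  define m where "m = Min (snd ` ?S)"
  have r_max: "fst p \<le> r" and m_min: "m \<le> snd p" if "p \<in> ?S" for p
    using that finite_level_set by (auto simp: r_def m_def)
  have corner: "(r, m) \<in> ?S" using level_set_corner_mem[OF assms] by (simp add: r_def m_def)
  define p0 where "p0 = (SOME p. p \<in> ?S \<and> snd p = Min (snd ` ?S))"
  have "p0 \<in> ?S \<and> snd p0 = m"
    unfolding p0_def m_def by (rule someI[of _ "(r, m)"]) (use corner in \<open>simp add: m_def\<close>)
  then obtain x0 where p0: "p0 = (x0, m)" "(x0, m) \<in> ?S" by (cases p0) auto
  have walk_down: "(strip_step ?S)\<^sup>*\<^sup>* p0 (x0 + d, m)" if "x0 + d \<le> r" for d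
    using that
  proof (induction d)
    case (Suc d)
    have "strip_step ?S (x0 + d, m) (x0 + Suc d, m)"
      using level_set_column_interval[OF p0(2) corner] Suc.prems by (simp add: strip_step_def)
    then show ?case using Suc by (simp add: rtranclp.rtrancl_into_rtrancl)
  qed (simp add: p0)
  have columns_pos: "snd u \<ge> 1" if "u \<in> ?S" for u
    using that mem_D_coords by (cases u) (fastforce simp: mem_level_set)
  have below_corner: "(Suc r, m) \<notin> ?S" using r_max by fastforce
  have left_of_corner: "(r, m - 1) \<notin> ?S" using m_min columns_pos[OF corner] by fastforce
  have "(strip_step ?S)\<^sup>*\<^sup>* p0 (r, m)"
    using walk_down[of "r - x0"] r_max[OF p0(2)] by simp
  then have "last_box (component ?S p0) = (r, m)"
    using last_box_component[OF level_set_no_hook columns_pos corner] below_corner left_of_corner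
    by simp
  then show ?thesis by (simp add: leftmost_component_def p0_def r_def m_def)
qed

subsection \<open>Counting letters along the reading word\<close>

abbreviation L :: "(nat \<times> nat) list" where
  "L \<equiv> reading_boxes D"

lemma set_L: "set L = D"
  using set_reading_boxes[OF finite_D] .

lemma nth_L_mem: "j < length L \<Longrightarrow> L ! j \<in> D"
  using set_L nth_mem by blast

lemma mcount_le_length:
  assumes "j < length L"
  shows "mcount (map T L) i j =
    card {q \<in> D. read_before (L ! (length L - j - 1)) q \<and> T q = (i, False)}"
proof -
  have "mcount (map T L) i j = length (filter (\<lambda>q. T q = (i, False)) (drop (length L - j) L))"
    using assms by (simp add: mcount_def drop_map filter_map comp_def)
  also have "\<dots> = card {q \<in> set (drop (Suc (length L - j - 1)) L). T q = (i, False)}"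
    using assms distinct_reading_boxes
    by (simp add: Suc_diff_Suc distinct_length_filter Int_def conj_commute)
  also have "\<dots> = card {q \<in> D. read_before (L ! (length L - j - 1)) q \<and> T q = (i, False)}"
    using set_drop_Suc_sorted_wrt[OF sorted_wrt_reading_boxes asymp_read_before,
        of "length L - j - 1"]
      assms set_L by (simp add: conj_assoc)
  finally show ?thesis .
qed

lemma mcount_gt_length:
  assumes "length L \<le> j" "j < 2 * length L"
  shows "mcount (map T L) i j = card {q \<in> D. T q = (i, False)} +
     card {q \<in> D. read_before q (L ! (j - length L)) \<and> T q = (i, True)}"
proof -
  have "mcount (map T L) i j = length (filter (\<lambda>q. T q = (i, False)) L) +
      length (filter (\<lambda>q. T q = (i, True)) (take (j - length L) L))"
    using assms by (simp add: mcount_def take_map filter_map comp_def)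
  also have "\<dots> = card {q \<in> set L. T q = (i, False)} +
      card {q \<in> set (take (j - length L) L). T q = (i, True)}"
    using distinct_reading_boxes by (simp add: distinct_length_filter Int_def conj_commute)
  also have "\<dots> = card {q \<in> D. T q = (i, False)} +
      card {q \<in> D. read_before q (L ! (j - length L)) \<and> T q = (i, True)}"
    using set_take_sorted_wrt[OF sorted_wrt_reading_boxes asymp_read_before, of "j - length L"]
      assms set_L by (simp add: conj_assoc)
  finally show ?thesis .
qed

lemma marked_has_unmarked_above:
  assumes "k > 1"
    and marked_diag: "\<And>x y. (x, y) \<in> D \<Longrightarrow> T (x, y) = (k, True) \<Longrightarrow>
      (x - 1, y - 1) \<in> D \<and> T (x - 1, y - 1) = (k - 1, True)"
  shows "(x, y) \<in> D \<Longrightarrow> T (x, y) = (k, True) \<Longrightarrow> \<exists>z<x. (z, y) \<in> D \<and> T (z, y) = (k - 1, False)"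
proof (induction x rule: less_induct)
  case (less x)
  have diag: "(x - 1, y - 1) \<in> D" "T (x - 1, y - 1) = (k - 1, True)"
    using marked_diag less.prems by auto
  have coords: "1 \<le> x - 1" "x - 1 \<le> y - 1" using mem_D_coords[OF diag(1)] by auto
  have up: "(x - 1, y) \<in> D"
    using skew_shifted_diagram_interval[OF DP_lam DP_mu diag(1) less.prems(1), of "x - 1" y] coords
    by simp
  have "lrank (T (x - 1, y - 1)) \<le> lrank (T (x - 1, y))" "lrank (T (x - 1, y)) \<le> lrank (T (x, y))"
    using row_mono[OF diag(1) up] column_mono[OF up less.prems(1)] by simp_all
  then consider
    "T (x - 1, y) = (k - 1, True)" | "T (x - 1, y) = (k - 1, False)" | "T (x - 1, y) = (k, True)"
    using letter_between_marked[OF entry_ge_1[OF up] \<open>k > 1\<close>] diag(2) less.prems(2) by auto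
  then show ?case
  proof cases
    case 1
    then show ?thesis using row_repeat_unmarked[OF diag(1) up] diag(2) coords by simp
  next
    case 2
    then show ?thesis using up coords by (intro exI[of _ "x - 1"]) auto
  next
    case 3
    then obtain z where "z < x - 1" "(z, y) \<in> D" "T (z, y) = (k - 1, False)"
      using less.IH[of "x - 1"] up coords by auto
    then show ?thesis by (intro exI[of _ z]) auto
  qed
qed

lemma card_unmarked_lt_in_region:
  assumes unmarked_above: "\<And>x y. (x, y) \<in> D \<Longrightarrow> T (x, y) = (k, False) \<Longrightarrow>
      \<exists>z<x. (z, y) \<in> D \<and> T (z, y) = (k - 1, False)"
    and up_closed: "\<And>x x' y. P (x, y) \<Longrightarrow> x' < x \<Longrightarrow> P (x', y)"
    and e: "(a, b) \<in> D" "P (a, b)" "T (a, b) = (k - 1, False)"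
    and e_unpaired: "\<And>x. (x, b) \<in> D \<Longrightarrow> P (x, b) \<Longrightarrow> T (x, b) = (k, False) \<Longrightarrow> x \<le> a"
  shows "card {q \<in> D. P q \<and> T q = (k, False)} < card {q \<in> D. P q \<and> T q = (k - 1, False)}"
proof -
  let ?K = "{q \<in> D. P q \<and> T q = (k, False)}"
  let ?H = "{q \<in> D. P q \<and> T q = (k - 1, False)}"
  have "\<forall>q \<in> ?K. \<exists>p. p \<in> ?H \<and> snd p = snd q \<and> fst p < fst q"
  proof
    fix q assume "q \<in> ?K"
    then obtain x y where q: "q = (x, y)" "(x, y) \<in> D" "P (x, y)" "T (x, y) = (k, False)"
      by (cases q) simp
    obtain z where "z < x" "(z, y) \<in> D" "T (z, y) = (k - 1, False)"
      using unmarked_above[OF q(2,4)] by blast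
    then show "\<exists>p. p \<in> ?H \<and> snd p = snd q \<and> fst p < fst q"
      using q up_closed[OF q(3)] by (intro exI[of _ "(z, y)"]) auto
  qed
  from bchoice[OF this] obtain f
    where f_prop: "\<forall>q \<in> ?K. f q \<in> ?H \<and> snd (f q) = snd q \<and> fst (f q) < fst q" ..
  have f: "f q \<in> ?H \<and> snd (f q) = snd q \<and> fst (f q) < fst q" if "q \<in> ?K" for q
    using bspec[OF f_prop that] .
  have "inj_on f ?K"
  proof (rule inj_onI)
    fix q q' assume q: "q \<in> ?K" "q' \<in> ?K" "f q = f q'"
    have "snd q = snd q'" using f[OF q(1)] f[OF q(2)] q(3) by simp
    then show "q = q'" using q by (intro unmarked_column_unique[of q q' k]) auto
  qed
  moreover have "f ` ?K \<subseteq> ?H - {(a, b)}"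
  proof (rule image_subsetI)
    fix q assume q: "q \<in> ?K"
    have "f q \<noteq> (a, b)"
    proof
      assume "f q = (a, b)"
      then have "snd q = b" "a < fst q" using f[OF q] by auto
      moreover have "(fst q, snd q) \<in> D" "P (fst q, snd q)" "T (fst q, snd q) = (k, False)"
        using q by auto
      ultimately show False using e_unpaired[of "fst q"] by auto
    qed
    then show "f q \<in> ?H - {(a, b)}" using f[OF q] by blast
  qed
  moreover have "finite ?H" by (rule finite_subset[OF _ finite_D]) auto
  ultimately have "card ?K \<le> card (?H - {(a, b)})" by (intro card_inj_on_le) auto
  also have "\<dots> < card ?H" using \<open>finite ?H\<close> e by (intro card_Diff1_less) auto
  finally show ?thesis .
qed

lemma card_unmarked_lt:
  assumes unmarked_above: "\<And>x y. (x, y) \<in> D \<Longrightarrow> T (x, y) = (k, False) \<Longrightarrow>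
      \<exists>z<x. (z, y) \<in> D \<and> T (z, y) = (k - 1, False)"
    and "(a, b) \<in> D" "T (a, b) = (k - 1, False)"
    and "\<And>x. x > a \<Longrightarrow> (x, b) \<in> D \<Longrightarrow> T (x, b) \<noteq> (k, False)"
  shows "card {q \<in> D. T q = (k, False)} < card {q \<in> D. T q = (k - 1, False)}"
proof -
  have "card {q \<in> D. True \<and> T q = (k, False)} < card {q \<in> D. True \<and> T q = (k - 1, False)}"
  proof (rule card_unmarked_lt_in_region[OF unmarked_above _ assms(2) _ assms(3)])
    show "x \<le> a" if "(x, b) \<in> D" "True" "T (x, b) = (k, False)" for x
      using assms(4)[of x] that by (meson not_less)
  qed simp_all
  then show ?thesis by simp
qed

lemma card_unmarked_read_after_lt:
  assumes "k > 1"
    and unmarked_above: "\<And>x y. (x, y) \<in> D \<Longrightarrow> T (x, y) = (k, False) \<Longrightarrow>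
      \<exists>z<x. (z, y) \<in> D \<and> T (z, y) = (k - 1, False)"
    and marked_diag: "\<And>x y. (x, y) \<in> D \<Longrightarrow> T (x, y) = (k, True) \<Longrightarrow>
      (x - 1, y - 1) \<in> D \<and> T (x - 1, y - 1) = (k - 1, True)"
    and "(x, y) \<in> D" "fst (T (x, y)) = k"
  shows "card {q \<in> D. read_before (x, y) q \<and> T q = (k, False)} <
    card {q \<in> D. read_before (x, y) q \<and> T q = (k - 1, False)}"
proof -
  have Txy: "T (x, y) = (k, False) \<or> T (x, y) = (k, True)"
    using assms(5) by (cases "T (x, y)") auto
  obtain z where z: "z < x" "(z, y) \<in> D" "T (z, y) = (k - 1, False)"
    using Txy
  proof
    assume "T (x, y) = (k, False)"
    then show ?thesis using unmarked_above[OF assms(4)] that by blast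
  next
    assume "T (x, y) = (k, True)"
    then show ?thesis using marked_has_unmarked_above[OF \<open>k > 1\<close> marked_diag assms(4)] that by blast
  qed
  have no_k_above: "T (x', y) \<noteq> (k, False)" if "x' < x" "(x', y) \<in> D" for x'
  proof
    assume "T (x', y) = (k, False)"
    moreover have "lrank (T (x', y)) \<le> lrank (T (x, y))"
      using column_mono[OF that(2) assms(4)] that(1) by simp
    ultimately show False
      using Txy unmarked_column_unique[OF that(2) assms(4)] that(1) \<open>k > 1\<close>
      by (auto simp: lrank_def)
  qed
  have up_closed: "read_before (x, y) (x', y')"
    if "read_before (x, y) (x'', y')" "x' < x''" for x' x'' y'
    using that by (auto simp: read_before_def)
  show ?thesis
  proof (rule card_unmarked_lt_in_region[where P = "read_before (x, y)",
        OF unmarked_above up_closed z(2) _ z(3)])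
    show "read_before (x, y) (z, y)" using z(1) by (simp add: read_before_def)
    show "x' \<le> z" if "(x', y) \<in> D" "read_before (x, y) (x', y)" "T (x', y) = (k, False)" for x'
      using no_k_above[of x'] that by (simp add: read_before_def)
  qed
qed

lemma card_marked_read_before_le:
  assumes "k > 1"
    and marked_diag: "\<And>x y. (x, y) \<in> D \<Longrightarrow> T (x, y) = (k, True) \<Longrightarrow>
      (x - 1, y - 1) \<in> D \<and> T (x - 1, y - 1) = (k - 1, True)"
    and p: "(r, c) \<in> D" "T (r, c) = (k - 1, False) \<or> T (r, c) = (k, True)"
  shows "card {q \<in> D. read_before q (r, c) \<and> T q = (k, True)} \<le>
    card {q \<in> D. read_before q (r, c) \<and> T q = (k - 1, True)}"
proof -
  let ?K = "{q \<in> D. read_before q (r, c) \<and> T q = (k, True)}"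
  let ?H = "{q \<in> D. read_before q (r, c) \<and> T q = (k - 1, True)}"
  let ?g = "\<lambda>q. (fst q - 1, snd q - 1)"
  have shift_read_before: "read_before (x - 1, y - 1) (r, c)"
    if q: "(x, y) \<in> D" "read_before (x, y) (r, c)" "T (x, y) = (k, True)" for x y
  proof -
    have diag: "(x - 1, y - 1) \<in> D" "T (x - 1, y - 1) = (k - 1, True)" using marked_diag q by auto
    have "r < x - 1 \<or> r = x - 1 \<or> (r = x \<and> y < c)"
      using q(2) by (auto simp: read_before_def)
    then consider "r < x - 1" | "r = x - 1" | "r = x" "y < c" by blast
    then show ?thesis
    proof cases
      case 2
      have "y - 1 < c"
      proof (rule ccontr)
        assume "\<not> y - 1 < c"
        then have "lrank (T (r, c)) \<le> lrank (T (r, y - 1))"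
          using row_mono[OF p(1)] diag(1) 2 by simp
        then show False using p(2) diag(2) 2 \<open>k > 1\<close> by (auto simp: lrank_def)
      qed
      then show ?thesis using 2 by (simp add: read_before_def)
    next
      case 3
      have "lrank (T (r, y)) \<le> lrank (T (r, c))" using row_mono[of x y c] q(1) p(1) 3 by simp
      then have "T (r, c) = T (r, y)" using p(2) q(3) 3 \<open>k > 1\<close> by (auto simp: lrank_def)
      then show ?thesis using row_repeat_unmarked[of x y c] q(1,3) p(1) 3 by simp
    qed (simp add: read_before_def)
  qed
  have coords_ge_2: "fst q \<ge> 2 \<and> snd q \<ge> 2" if "q \<in> ?K" for q
    using that marked_diag[of "fst q" "snd q"] mem_D_coords[of "fst q - 1" "snd q - 1"] by auto
  have "inj_on ?g ?K"
  proof (rule inj_onI)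
    fix q q' assume q: "q \<in> ?K" "q' \<in> ?K" "?g q = ?g q'"
    have "fst q - 1 = fst q' - 1" "snd q - 1 = snd q' - 1" using q(3) by simp_all
    then show "q = q'" using coords_ge_2[OF q(1)] coords_ge_2[OF q(2)] by (intro prod_eqI) linarith+
  qed
  moreover have "?g ` ?K \<subseteq> ?H"
  proof (rule image_subsetI)
    fix q assume "q \<in> ?K"
    then show "?g q \<in> ?H"
      using marked_diag[of "fst q" "snd q"] shift_read_before[of "fst q" "snd q"] by auto
  qed
  moreover have "finite ?H" by (rule finite_subset[OF _ finite_D]) auto
  ultimately show ?thesis by (rule card_inj_on_le)
qed

lemma fitting_first_letter_unmarked:
  assumes j: "j < length L" "fst (T (L ! j)) = i"
    and first: "\<forall>j'<j. fst (T (L ! j')) \<noteq> i"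
    and "fitting D T i"
  shows "T (L ! j) = (i, False)"
proof -
  let ?S = "level_set D T i"
  define r where "r = Max (fst ` ?S)"
  define m where "m = Min (snd ` ?S)"
  have jS: "L ! j \<in> ?S" using nth_L_mem[OF j(1)] j(2) by (simp add: mem_level_set)
  then have "?S \<noteq> {}" by blast
  then have corner: "(r, m) \<in> ?S" "T (r, m) = (i, False)"
    using level_set_corner_mem last_box_level_set \<open>fitting D T i\<close>
    by (simp_all add: r_def m_def fitting_def)
  then obtain j' where j': "j' < length L" "L ! j' = (r, m)"
    using set_L by (metis in_set_conv_nth mem_level_set)
  have "\<not> j' < j" using first j' corner(1) by (auto simp: mem_level_set)
  moreover have "\<not> j < j'"
  proof
    assume "j < j'"
    then have "read_before (L ! j) (r, m)"
      using sorted_wrt_nth_less[OF sorted_wrt_reading_boxes _ j'(1)] j'(2) by auto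
    moreover have "fst (L ! j) \<le> r" "m \<le> snd (L ! j)"
      using jS finite_level_set by (auto simp: r_def m_def)
    ultimately show False by (auto simp: read_before_def)
  qed
  ultimately show ?thesis using j' corner(2) by simp
qed

lemma amenable_if_no_letters:
  assumes "content D T k = 0" "content D T (k - 1) = 0"
  shows "amenable_tableau k D T"
proof -
  let ?w = "reading_word D T"
  have "fst (T q) \<noteq> k \<and> fst (T q) \<noteq> k - 1" if "q \<in> D" for q
    using content_pos[OF that, of k] content_pos[OF that, of "k - 1"] assms by auto
  then have "fst a \<noteq> k \<and> fst a \<noteq> k - 1" if "a \<in> set ?w" for a
    using that by (auto simp: reading_word_eq_map set_L)
  then have letters: "fst (?w ! i) = k \<longleftrightarrow> False" "fst (?w ! i) = k - 1 \<longleftrightarrow> False"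
    if "i < length ?w" for i
    using nth_mem[OF that] by blast+
  show ?thesis
    unfolding amenable_tableau_def amenable_word_def Let_def
  proof (intro conjI allI impI)
    fix j assume "j < length ?w"
    then show "fst (?w ! (length ?w - j - 1)) \<noteq> k" using letters(1)[of "length ?w - j - 1"] by simp
  next
    fix j assume "length ?w \<le> j \<and> j < 2 * length ?w"
    then have "j - length ?w < length ?w" by linarith
    then show "?w ! (j - length ?w) \<noteq> (k - 1, False)" "?w ! (j - length ?w) \<noteq> (k, True)"
      using letters[of "j - length ?w"] by auto
  qed (use letters in simp_all)
qed

lemma amenable_if_conditions:
  assumes "k > 1"
    and free: "\<exists>x y. (x,y) \<in> D \<and> T (x,y) = (k - 1, False) \<and>
                 (\<forall>z > x. (z,y) \<in> D \<longrightarrow> T (z,y) \<noteq> (k, False))"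
    and unmarked_above: "\<forall>x y. (x,y) \<in> D \<and> T (x,y) = (k, False) \<longrightarrow>
                 (\<exists>z < x. (z,y) \<in> D \<and> T (z,y) = (k - 1, False))"
    and marked_diag: "\<forall>x y. (x,y) \<in> D \<and> T (x,y) = (k, True) \<longrightarrow>
                 (x - 1, y - 1) \<in> D \<and> T (x - 1, y - 1) = (k - 1, True)"
    and fitting: "fitting D T (k - 1)" "content D T k > 0 \<longrightarrow> fitting D T k"
  shows "amenable_tableau k D T"
proof -
  let ?n = "length L"
  have a: "fst (T (L ! (?n - j - 1))) \<noteq> k"
    if j: "j < ?n" "mcount (map T L) k j = mcount (map T L) (k - 1) j" for j
  proof
    obtain x y where xy: "L ! (?n - j - 1) = (x, y)" by (cases "L ! (?n - j - 1)")
    have xyD: "(x, y) \<in> D" using nth_L_mem[of "?n - j - 1"] j(1) xy by simp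
    assume "fst (T (L ! (?n - j - 1))) = k"
    then have "fst (T (x, y)) = k" using xy by simp
    have "card {q \<in> D. read_before (x, y) q \<and> T q = (k, False)} <
        card {q \<in> D. read_before (x, y) q \<and> T q = (k - 1, False)}"
      by (rule card_unmarked_read_after_lt[OF \<open>k > 1\<close> _ _ xyD \<open>fst (T (x, y)) = k\<close>])
        (use unmarked_above marked_diag in blast)+
    moreover have
      "mcount (map T L) i j = card {q \<in> D. read_before (x, y) q \<and> T q = (i, False)}" for i
      using mcount_le_length[OF j(1)] xy by simp
    ultimately show False using j(2) by simp
  qed
  have b: "T (L ! (j - ?n)) \<noteq> (k - 1, False) \<and> T (L ! (j - ?n)) \<noteq> (k, True)"
    if j: "?n \<le> j" "j < 2 * ?n" "mcount (map T L) k j = mcount (map T L) (k - 1) j" for j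
  proof (rule ccontr)
    obtain r c where rc: "L ! (j - ?n) = (r, c)" by (cases "L ! (j - ?n)")
    have rcD: "(r, c) \<in> D" using nth_L_mem[of "j - ?n"] j(1,2) rc by simp
    obtain a b where ab: "(a, b) \<in> D" "T (a, b) = (k - 1, False)"
      "\<And>x. x > a \<Longrightarrow> (x, b) \<in> D \<Longrightarrow> T (x, b) \<noteq> (k, False)"
      using free by blast
    have "card {q \<in> D. T q = (k, False)} < card {q \<in> D. T q = (k - 1, False)}"
      by (rule card_unmarked_lt[OF _ ab]) (use unmarked_above in auto)
    moreover assume "\<not> (T (L ! (j - ?n)) \<noteq> (k - 1, False) \<and> T (L ! (j - ?n)) \<noteq> (k, True))"
    then have "card {q \<in> D. read_before q (r, c) \<and> T q = (k, True)} \<le>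
        card {q \<in> D. read_before q (r, c) \<and> T q = (k - 1, True)}"
      using card_marked_read_before_le[OF \<open>k > 1\<close> _ rcD] rc marked_diag by auto
    ultimately show False using j mcount_gt_length[OF j(1,2)] rc by simp
  qed
  have cd: "T (L ! j) = (i, False)"
    if "j < ?n" "i = k \<or> i = k - 1" "fst (T (L ! j)) = i" "\<forall>j'<j. fst (T (L ! j')) \<noteq> i" for i j
    using fitting_first_letter_unmarked[OF that(1,3,4)] fitting that(2)
      content_pos[OF nth_L_mem[OF that(1)] that(3)] by auto
  show ?thesis
    unfolding amenable_tableau_def amenable_word_def Let_def reading_word_eq_map length_map
  proof (intro conjI allI impI)
    fix j assume "j < ?n" "mcount (map T L) k j = mcount (map T L) (k - 1) j"
    then show "fst (map T L ! (?n - j - 1)) \<noteq> k" using a by simp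
  next
    fix j assume "?n \<le> j \<and> j < 2 * ?n" "mcount (map T L) k j = mcount (map T L) (k - 1) j"
    then show "map T L ! (j - ?n) \<noteq> (k - 1, False)" "map T L ! (j - ?n) \<noteq> (k, True)"
      using b[of j] by (simp_all add: less_diff_conv2)
  next
    fix j assume "j < ?n" "fst (map T L ! j) = k \<and> (\<forall>i<j. fst (map T L ! i) \<noteq> k)"
    then show "map T L ! j = (k, False)" using cd[of j k] by simp
  next
    fix j assume "j < ?n" "fst (map T L ! j) = k - 1 \<and> (\<forall>i<j. fst (map T L ! i) \<noteq> k - 1)"
    then show "map T L ! j = (k - 1, False)" using cd[of j "k - 1"] by simp
  qed
qed

end

theorem corollary2p22:
  fixes lam mu :: "nat list" and k :: nat and T :: "nat \<times> nat \<Rightarrow> letter"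
  defines "D \<equiv> shifted_diagram lam - shifted_diagram mu"
  assumes "DP lam" and "DP mu" and "shifted_diagram mu \<subseteq> shifted_diagram lam"
    and "k > 1"
    and "is_tableau D T"
    and "(content D T k = 0 \<and> content D T (k - 1) = 0) \<or>
         ((\<exists>x y. (x,y) \<in> D \<and> T (x,y) = (k - 1, False) \<and>
                 (\<forall>z > x. (z,y) \<in> D \<longrightarrow> T (z,y) \<noteq> (k, False))) \<and>
          (\<forall>x y. (x,y) \<in> D \<and> T (x,y) = (k, False) \<longrightarrow>
                 (\<exists>z < x. (z,y) \<in> D \<and> T (z,y) = (k - 1, False))) \<and>
          (\<forall>x y. (x,y) \<in> D \<and> T (x,y) = (k, True) \<longrightarrow>
                 (x - 1, y - 1) \<in> D \<and> T (x - 1, y - 1) = (k - 1, True)) \<and>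
          fitting D T (k - 1) \<and>
          (content D T k > 0 \<longrightarrow> fitting D T k))"
  shows "amenable_tableau k D T"
proof -
  have tableau: "skew_shifted_tableau lam mu T"
    using assms(2,3,6) unfolding skew_shifted_tableau_def D_def by blast
  show ?thesis
    using assms(7) unfolding D_def
    by (elim disjE conjE)
      (erule (1) skew_shifted_tableau.amenable_if_no_letters[OF tableau],
       erule (4) skew_shifted_tableau.amenable_if_conditions[OF tableau \<open>k > 1\<close>])
qed

end
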